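(* Let $S_f$ and $S_g$ be two equivalent inequality sets in $\mathbf{x}=(x_1,\ldots,x_n)$ (i.e., with the same solution set in $\mathbb{R}^n$), and fix the variable order $x_1\prec\cdots\prec x_n$. Then their reduced minimal characterization sets are the same: the equality parts coincide and the inequality parts are trivially equivalent.
   Context: An inequality set is a finite set $S=\{f_i\ge 0: i=1,\ldots,m\}$ with each $f_i$ a nonzero homogeneous linear polynomial in $\mathbf{x}$ with real coefficients; its solutions are the points of $\mathbb{R}^n$ satisfying all inequalities; a subset of $S$ is an inequality set whose polynomials form a subset of $\{f_1,\ldots,f_m\}$. The equality $f_k=0$ is an implied equality of $S$ if $f_k(\mathbf{x})=0$ for every solution of $S$. Inequalities $f_1\ge0,\ldots,f_k\ge0$ imply $f\ge0$ if every $\mathbf{x}$ satisfying the former satisfies $f(\mathbf{x})\ge0$; an inequality of a set is redundant if implied by the other inequalities of the set. Two inequality sets are equivalent if they have the same solution set. A subset $S'$ of $S$ is a minimal characterization set of $S$ if $S'$ is equivalent to $S$ and contains no redundant inequality. Two inequalities $f\ge0$, $g\ge 0$ are trivially equivalent if $f=c\,g$ for some real $c>0$; two inequality sets are trivially equivalent if they have the same number of inequalities and each inequality of either set is trivially equivalent to some inequality of the other. For a finite system $E$ of homogeneous linear equations of rank $\tilde n$, its Gauss–Jordan reduced form (reduced row echelon form) w.r.t. $x_1\prec\cdots\prec x_n$ is the unique equivalent system $\{x_{k_i}-U_i=0: i=1,\ldots,\tilde n\}$, $k_1<\cdots<k_{\tilde n}$, each $U_i$ a real linear combination of non-pivot variables.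 For an inequality set $S_f=\{f_i\ge0\}$: let $I$ be the set of indices $k$ with $f_k=0$ an implied equality of $S_f$, $E=\{f_k=0:k\in I\}$, and $\widetilde E=\{x_{k_i}-U_i=0\}$ its Gauss–Jordan reduced form; let $R_f$ be the set of nonzero polynomials obtained from $f_j$, $j\notin I$, by substituting $U_i$ for $x_{k_i}$ for all $i$. The reduced minimal characterization set of $S_f$ is $\widetilde{E}\cup S_{r'}$, where $S_{r'}$ is a minimal characterization set of $\{g\ge 0: g\in R_f\}$ (unique up to trivial equivalence). *)

theory Defs
  imports Complex_Main
begin

text \<open>Homogeneous linear polynomials in x_0,...,x_(n-1) (0-based indices, the paper's
x_1,...,x_n) are represented by coefficient vectors a :: nat => real with a i = 0 for i >= n.\<close>

definition vecs :: "nat \<Rightarrow> (nat \<Rightarrow> real) set" where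
  "vecs n = {x. \<forall>i\<ge>n. x i = 0}"

definition lin :: "nat \<Rightarrow> (nat \<Rightarrow> real) \<Rightarrow> (nat \<Rightarrow> real) \<Rightarrow> real" where
  "lin n a x = (\<Sum>i<n. a i * x i)"

definition ineq_set :: "nat \<Rightarrow> (nat \<Rightarrow> real) set \<Rightarrow> bool" where
  "ineq_set n S \<longleftrightarrow> finite S \<and> S \<subseteq> vecs n \<and> (\<lambda>_. 0) \<notin> S"

definition sols :: "nat \<Rightarrow> (nat \<Rightarrow> real) set \<Rightarrow> (nat \<Rightarrow> real) set" where
  "sols n S = {x \<in> vecs n. \<forall>f\<in>S. lin n f x \<ge> 0}"

definition implied_eq :: "nat \<Rightarrow> (nat \<Rightarrow> real) set \<Rightarrow> (nat \<Rightarrow> real) \<Rightarrow> bool" where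
  "implied_eq n S f \<longleftrightarrow> f \<in> S \<and> (\<forall>x\<in>sols n S. lin n f x = 0)"

definition implied_eqs :: "nat \<Rightarrow> (nat \<Rightarrow> real) set \<Rightarrow> (nat \<Rightarrow> real) set" where
  "implied_eqs n S = {f \<in> S. implied_eq n S f}"

definition redundant :: "nat \<Rightarrow> (nat \<Rightarrow> real) set \<Rightarrow> (nat \<Rightarrow> real) \<Rightarrow> bool" where
  "redundant n S f \<longleftrightarrow> f \<in> S \<and> (\<forall>x\<in>sols n (S - {f}). lin n f x \<ge> 0)"

definition min_char_set :: "nat \<Rightarrow> (nat \<Rightarrow> real) set \<Rightarrow> (nat \<Rightarrow> real) set \<Rightarrow> bool" where
  "min_char_set n S M \<longleftrightarrow> M \<subseteq> S \<and> sols n M = sols n S \<and> (\<forall>f\<in>M. \<not> redundant n M f)"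

definition triv_equiv :: "(nat \<Rightarrow> real) \<Rightarrow> (nat \<Rightarrow> real) \<Rightarrow> bool" where
  "triv_equiv f g \<longleftrightarrow> (\<exists>c>0. f = (\<lambda>i. c * g i))"

definition triv_equiv_sets :: "(nat \<Rightarrow> real) set \<Rightarrow> (nat \<Rightarrow> real) set \<Rightarrow> bool" where
  "triv_equiv_sets A B \<longleftrightarrow> card A = card B \<and>
     (\<forall>f\<in>A. \<exists>g\<in>B. triv_equiv f g) \<and> (\<forall>g\<in>B. \<exists>f\<in>A. triv_equiv g f)"

definition eq_sols :: "nat \<Rightarrow> (nat \<Rightarrow> real) set \<Rightarrow> (nat \<Rightarrow> real) set" where
  "eq_sols n E = {x \<in> vecs n. \<forall>e\<in>E. lin n e x = 0}"

definition pivot :: "(nat \<Rightarrow> real) \<Rightarrow> nat" where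
  "pivot g = (LEAST k. g k \<noteq> 0)"

text \<open>G = {x_(k_i) - U_i} is the Gauss-Jordan reduced form of E: an equivalent system
of nonzero rows, each with leading coefficient 1 at its pivot, and every other row
vanishing in that pivot column (so U_i involves only non-pivot variables).\<close>
definition gj_reduced_form :: "nat \<Rightarrow> (nat \<Rightarrow> real) set \<Rightarrow> (nat \<Rightarrow> real) set \<Rightarrow> bool" where
  "gj_reduced_form n E G \<longleftrightarrow> finite G \<and> G \<subseteq> vecs n \<and> (\<lambda>_. 0) \<notin> G \<and>
     eq_sols n G = eq_sols n E \<and>
     (\<forall>g\<in>G. g (pivot g) = 1 \<and> (\<forall>g'\<in>G. g' \<noteq> g \<longrightarrow> g' (pivot g) = 0))"

text \<open>Substituting U_i = x_(k_i) - g_i for x_(k_i) in the linear form a.\<close>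
definition subst :: "(nat \<Rightarrow> real) set \<Rightarrow> (nat \<Rightarrow> real) \<Rightarrow> (nat \<Rightarrow> real)" where
  "subst G a = (\<lambda>i. a i - (\<Sum>g\<in>G. a (pivot g) * g i))"

definition reduced_ineqs :: "nat \<Rightarrow> (nat \<Rightarrow> real) set \<Rightarrow> (nat \<Rightarrow> real) set \<Rightarrow> (nat \<Rightarrow> real) set" where
  "reduced_ineqs n S G = {subst G f | f. f \<in> S \<and> \<not> implied_eq n S f} - {\<lambda>_. 0}"

end

theory Submission
  imports Defs
begin

text \<open>The implied equalities of an inequality set S cut out exactly the linear span of its
solution cone, because a point of the relative interior of the cone absorbs any element of that
span; hence equivalent sets have the same equality space, and a Gauss-Jordan reduced form is
determined by its solution space. Substituting the reduced equations turns S into a set of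
inequalities whose cone is the preimage of the cone of S under the projection onto the equality
space along the pivot coordinates, so it again depends only on the solutions of S, and it has an
interior point. In a cone with an interior point every irredundant inequality vanishes on a facet,
and any system defining the same cone must contain a positive multiple of it; irredundancy also
excludes two positively proportional members, so two minimal characterizations agree up to
positive scaling.\<close>

lemma lin_add_scaled: "lin n f (\<lambda>i. c * x i + d * y i) = c * lin n f x + d * lin n f y"
  by (simp add: lin_def sum.distrib sum_distrib_left algebra_simps)

lemma lin_scaled: "lin n f (\<lambda>i. c * x i) = c * lin n f x"
  by (simp add: lin_def sum_distrib_left algebra_simps)

lemma lin_diff: "lin n f (\<lambda>i. x i - y i) = lin n f x - lin n f y"
  by (simp add: lin_def sum_subtractf algebra_simps)

lemma lin_minus: "lin n f (\<lambda>i. - x i) = - lin n f x"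
  by (simp add: lin_def sum_negf)

lemma lin_sum: "lin n f (\<lambda>i. \<Sum>k\<in>K. y k i) = (\<Sum>k\<in>K. lin n f (y k))"
  unfolding lin_def by (simp add: sum_distrib_left) (rule sum.swap)

lemma lin_scaled_form: "lin n (\<lambda>i. c * g i) x = c * lin n g x"
  by (simp add: lin_def sum_distrib_left mult.assoc)

lemma lin_unit_vector: "i < n \<Longrightarrow> lin n f (\<lambda>j. if j = i then d else 0) = f i * d"
  by (simp add: lin_def if_distrib cong: if_cong)

lemma vecs_add_scaled: "x \<in> vecs n \<Longrightarrow> y \<in> vecs n \<Longrightarrow> (\<lambda>i. c * x i + d * y i) \<in> vecs n"
  unfolding vecs_def by simp

lemma unit_vector_vecs: "i < n \<Longrightarrow> (\<lambda>j. if j = i then d else 0) \<in> vecs n"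
  unfolding vecs_def by simp

lemma ex_multiple_add_mem_sols:
  assumes "finite M" "w \<in> vecs n" "v \<in> vecs n"
    and "\<forall>f\<in>M. lin n f w > 0 \<or> (lin n f w \<ge> 0 \<and> lin n f v \<ge> 0)"
  shows "\<exists>K\<ge>0. (\<lambda>i. K * w i + v i) \<in> sols n M"
proof -
  define F where "F = {f\<in>M. lin n f w > 0}"
  define K where "K = (\<Sum>f\<in>F. \<bar>lin n f v\<bar> / lin n f w)"
  have "finite F" using assms(1) unfolding F_def by simp
  have K_nonneg: "K \<ge> 0" unfolding K_def F_def by (intro sum_nonneg) simp
  have "K * lin n f w + lin n f v \<ge> 0" if "f \<in> M" for f
  proof (cases "f \<in> F")
    case True
    then have "\<bar>lin n f v\<bar> / lin n f w \<le> K"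
      unfolding K_def using \<open>finite F\<close> by (intro member_le_sum) (auto simp: F_def)
    then have "\<bar>lin n f v\<bar> \<le> K * lin n f w" using True by (simp add: F_def pos_divide_le_eq)
    then show ?thesis by linarith
  next
    case False
    then show ?thesis using assms(4) that K_nonneg by (auto simp: F_def)
  qed
  moreover have "lin n f (\<lambda>i. K * w i + v i) = K * lin n f w + lin n f v" for f
    using lin_add_scaled[of n f K w 1 v] by simp
  moreover have "(\<lambda>i. K * w i + v i) \<in> vecs n" using vecs_add_scaled[OF assms(2,3), of K 1] by simp
  ultimately show ?thesis using K_nonneg unfolding sols_def by auto
qed

section \<open>Gauss-Jordan reduced forms\<close>

lemma pivot_less:
  assumes "g \<in> vecs n" "g \<noteq> (\<lambda>_. 0)"
  shows "pivot g < n"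
proof -
  obtain k where k: "g k \<noteq> 0" using assms(2) by auto
  then have "k < n" using assms(1) leI unfolding vecs_def by blast
  moreover have "pivot g \<le> k" unfolding pivot_def using k by (rule Least_le)
  ultimately show ?thesis by simp
qed

lemma pivot_before: "i < pivot g \<Longrightarrow> g i = 0"
  unfolding pivot_def using not_less_Least by blast

lemma pivot_eqI: "g k \<noteq> 0 \<Longrightarrow> (\<And>i. i < k \<Longrightarrow> g i = 0) \<Longrightarrow> pivot g = k"
  unfolding pivot_def by (rule Least_equality) (assumption, meson not_le)

definition rref :: "nat \<Rightarrow> (nat \<Rightarrow> real) set \<Rightarrow> bool" where
  "rref n G \<longleftrightarrow> finite G \<and> G \<subseteq> vecs n \<and> (\<lambda>_. 0) \<notin> G \<and>
     (\<forall>g\<in>G. g (pivot g) = 1 \<and> (\<forall>g'\<in>G. g' \<noteq> g \<longrightarrow> g' (pivot g) = 0))"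

lemma gj_reduced_form_iff: "gj_reduced_form n E G \<longleftrightarrow> rref n G \<and> eq_sols n G = eq_sols n E"
  unfolding gj_reduced_form_def rref_def by blast

lemma rref_pivot_coeff: "rref n G \<Longrightarrow> g \<in> G \<Longrightarrow> h \<in> G \<Longrightarrow> h (pivot g) = (if h = g then 1 else 0)"
  unfolding rref_def by auto

lemma inj_on_pivot_rref: "rref n G \<Longrightarrow> inj_on pivot G"
  by (rule inj_onI) (metis rref_pivot_coeff one_neq_zero)

lemma rref_pivot_less: "rref n G \<Longrightarrow> g \<in> G \<Longrightarrow> pivot g < n"
  unfolding rref_def using pivot_less by blast

lemma rref_sum_pivot_coeff:
  assumes "rref n G" "h \<in> G"
  shows "(\<Sum>g\<in>G. h (pivot g) * c g) = c h"
proof -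
  have "(\<Sum>g\<in>G. h (pivot g) * c g) = (\<Sum>g\<in>G. if h = g then c g else 0)"
    by (rule sum.cong) (use rref_pivot_coeff[OF assms(1) _ assms(2)] in auto)
  also have "\<dots> = c h" using assms unfolding rref_def by simp
  finally show ?thesis .
qed

lemma lin_subst: "lin n (subst G a) x = lin n a x - (\<Sum>g\<in>G. a (pivot g) * lin n g x)"
proof -
  have "lin n (subst G a) x = (\<Sum>i<n. a i * x i - (\<Sum>g\<in>G. a (pivot g) * g i * x i))"
    unfolding lin_def subst_def by (rule sum.cong) (auto simp: left_diff_distrib sum_distrib_right)
  also have "\<dots> = lin n a x - (\<Sum>i<n. \<Sum>g\<in>G. a (pivot g) * g i * x i)"
    by (simp add: sum_subtractf lin_def)
  also have "(\<Sum>i<n. \<Sum>g\<in>G. a (pivot g) * g i * x i) = (\<Sum>g\<in>G. a (pivot g) * lin n g x)"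
    by (subst sum.swap) (simp add: lin_def sum_distrib_left mult.assoc)
  finally show ?thesis .
qed

lemma lin_subst_eq_sols: "x \<in> eq_sols n G \<Longrightarrow> lin n (subst G a) x = lin n a x"
  by (simp add: lin_subst eq_sols_def)

lemma subst_vecs: "G \<subseteq> vecs n \<Longrightarrow> a \<in> vecs n \<Longrightarrow> subst G a \<in> vecs n"
  unfolding vecs_def subst_def by (auto intro!: sum.neutral)

text \<open>The projection onto eq_sols n G along the pivot coordinates; substitution is its adjoint.\<close>

definition proj :: "nat \<Rightarrow> (nat \<Rightarrow> real) set \<Rightarrow> (nat \<Rightarrow> real) \<Rightarrow> (nat \<Rightarrow> real)" where
  "proj n G x = (\<lambda>i. x i - (\<Sum>g\<in>G. if i = pivot g then lin n g x else 0))"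

lemma lin_proj:
  assumes "rref n G"
  shows "lin n a (proj n G x) = lin n (subst G a) x"
proof -
  have "lin n a (\<lambda>i. \<Sum>g\<in>G. if i = pivot g then lin n g x else 0) = (\<Sum>g\<in>G. a (pivot g) * lin n g x)"
    using rref_pivot_less[OF assms] by (simp add: lin_sum lin_unit_vector)
  then show ?thesis unfolding proj_def lin_diff by (simp add: lin_subst)
qed

lemma proj_vecs: "rref n G \<Longrightarrow> x \<in> vecs n \<Longrightarrow> proj n G x \<in> vecs n"
  using rref_pivot_less[of n G] unfolding vecs_def proj_def
  by (auto intro!: sum.neutral) (metis not_le)

lemma proj_mem_eq_sols:
  assumes "rref n G" "x \<in> vecs n"
  shows "proj n G x \<in> eq_sols n G"
  unfolding eq_sols_def using proj_vecs[OF assms]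
  by (auto simp: lin_proj[OF assms(1)] lin_subst rref_sum_pivot_coeff[OF assms(1), of _ "\<lambda>g. lin n g x"])

lemma rref_span:
  assumes G: "rref n G" and a: "a \<in> vecs n" and vanish: "\<forall>x\<in>eq_sols n G. lin n a x = 0"
  shows "a i = (\<Sum>g\<in>G. a (pivot g) * g i)"
proof -
  have "subst G a i = 0"
  proof (cases "i < n")
    case True
    let ?e = "\<lambda>j. if j = i then 1 else 0 :: real"
    have "subst G a i = lin n (subst G a) ?e" using True by (simp add: lin_unit_vector)
    also have "\<dots> = lin n a (proj n G ?e)" by (simp add: lin_proj[OF G])
    also have "\<dots> = 0" using vanish proj_mem_eq_sols[OF G unit_vector_vecs[OF True]] by blast
    finally show ?thesis .
  next
    case False
    then show ?thesis using subst_vecs[OF _ a, of G] G unfolding rref_def vecs_def by simp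
  qed
  then show ?thesis unfolding subst_def by simp
qed

lemma rref_pivot_mem:
  assumes G: "rref n G" and a: "a \<in> vecs n" "a \<noteq> (\<lambda>_. 0)"
    and vanish: "\<forall>x\<in>eq_sols n G. lin n a x = 0"
  shows "pivot a \<in> pivot ` G"
proof -
  have span: "a i = (\<Sum>g\<in>G. a (pivot g) * g i)" for i by (rule rref_span[OF G a(1) vanish])
  have "\<exists>g\<in>G. a (pivot g) \<noteq> 0"
  proof (rule ccontr)
    assume "\<not> ?thesis"
    then have "a i = 0" for i using span[of i] by simp
    with a(2) show False by auto
  qed
  then obtain g0 where g0: "g0 \<in> G" "a (pivot g0) \<noteq> 0"
    and least: "\<And>g. g \<in> G \<Longrightarrow> a (pivot g) \<noteq> 0 \<Longrightarrow> pivot g0 \<le> pivot g"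
    using ex_has_least_nat[of "\<lambda>g. g \<in> G \<and> a (pivot g) \<noteq> 0" _ pivot] by blast
  have "a i = 0" if "i < pivot g0" for i
    unfolding span[of i] using least that
    by (intro sum.neutral) (metis less_le_trans mult_eq_0_iff pivot_before)
  then have "pivot a = pivot g0" using g0(2) by (intro pivot_eqI)
  with g0(1) show ?thesis by blast
qed

lemma rref_subset:
  assumes G1: "rref n G1" and G2: "rref n G2" and eq: "eq_sols n G1 = eq_sols n G2"
  shows "G2 \<subseteq> G1"
proof
  have vanish: "\<forall>x\<in>eq_sols n G. lin n h x = 0" if "h \<in> G'" "eq_sols n G = eq_sols n G'" for h G G'
    using that unfolding eq_sols_def by auto
  have pivot_mem: "pivot h \<in> pivot ` G" if "rref n G" "rref n G'" "eq_sols n G = eq_sols n G'" "h \<in> G'"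
    for h G G'
    using that vanish[OF that(4,3)] by (intro rref_pivot_mem) (auto simp: rref_def)
  fix h assume h: "h \<in> G2"
  obtain gh where gh: "gh \<in> G1" "pivot gh = pivot h" using pivot_mem[OF G1 G2 eq h] by auto
  have coeff: "h (pivot g) = (if g = gh then 1 else 0)" if g: "g \<in> G1" for g
  proof -
    obtain h' where h': "h' \<in> G2" "pivot h' = pivot g"
      using pivot_mem[OF G2 G1 eq[symmetric] g] by auto
    have "h = h' \<longleftrightarrow> g = gh"
      using inj_on_pivot_rref[OF G1] inj_on_pivot_rref[OF G2] g gh h h'
      by (metis inj_on_contraD)
    then show ?thesis using rref_pivot_coeff[OF G2 h'(1) h] h'(2) by simp
  qed
  have "h i = gh i" for i
  proof -
    have "h i = (\<Sum>g\<in>G1. h (pivot g) * g i)"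
      using G2 h by (intro rref_span[OF G1] vanish[OF h eq]) (auto simp: rref_def)
    also have "\<dots> = (\<Sum>g\<in>G1. if g = gh then g i else 0)" by (rule sum.cong) (simp_all add: coeff)
    also have "\<dots> = gh i" using G1 gh(1) by (simp add: rref_def)
    finally show ?thesis .
  qed
  then show "h \<in> G1" using gh(1) by (metis ext)
qed

lemma rref_unique: "rref n G1 \<Longrightarrow> rref n G2 \<Longrightarrow> eq_sols n G1 = eq_sols n G2 \<Longrightarrow> G1 = G2"
  using rref_subset by (metis subset_antisym)

section \<open>Implied equalities\<close>

lemma ex_relative_interior_point:
  assumes "finite S"
  shows "\<exists>x0\<in>sols n S. \<forall>f\<in>S. \<not> implied_eq n S f \<longrightarrow> lin n f x0 > 0"
proof -
  define N where "N = {f\<in>S. \<not> implied_eq n S f}"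
  have "finite N" using assms unfolding N_def by simp
  have "\<forall>f\<in>N. \<exists>y\<in>sols n S. lin n f y \<noteq> 0"
    unfolding N_def implied_eq_def by auto
  then obtain y where y: "\<And>f. f \<in> N \<Longrightarrow> y f \<in> sols n S \<and> lin n f (y f) \<noteq> 0" by metis
  have y_nonneg: "h \<in> S \<Longrightarrow> f \<in> N \<Longrightarrow> lin n h (y f) \<ge> 0" for h f
    using y[of f] unfolding sols_def by auto
  define x0 where "x0 = (\<lambda>i. \<Sum>f\<in>N. y f i)"
  have lin_x0: "lin n h x0 = (\<Sum>f\<in>N. lin n h (y f))" for h unfolding x0_def by (rule lin_sum)
  have "x0 \<in> vecs n" using y unfolding x0_def vecs_def sols_def by (auto intro!: sum.neutral)
  then have "x0 \<in> sols n S" unfolding sols_def by (auto simp: lin_x0 y_nonneg intro!: sum_nonneg)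
  moreover have "lin n f x0 > 0" if "f \<in> S" "\<not> implied_eq n S f" for f
  proof -
    have f: "f \<in> N" using that unfolding N_def by simp
    have "0 < lin n f (y f)" using y_nonneg[OF that(1) f] y[OF f] by linarith
    also have "\<dots> \<le> lin n f x0"
      unfolding lin_x0 using \<open>finite N\<close> f y_nonneg[OF that(1)] by (intro member_le_sum) auto
    finally show ?thesis .
  qed
  ultimately show ?thesis by blast
qed

lemma lin_implied_eq_zero: "x \<in> sols n S \<Longrightarrow> f \<in> implied_eqs n S \<Longrightarrow> lin n f x = 0"
  unfolding implied_eqs_def implied_eq_def by auto

lemma sols_subset_eq_sols_implied_eqs: "sols n S \<subseteq> eq_sols n (implied_eqs n S)"
  using lin_implied_eq_zero unfolding eq_sols_def sols_def by blast

lemma eq_sols_implied_eqs: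
  assumes "finite S"
  shows "eq_sols n (implied_eqs n S) = {(\<lambda>i. a i - b i) | a b. a \<in> sols n S \<and> b \<in> sols n S}"
proof (intro subset_antisym subsetI)
  fix x assume x: "x \<in> eq_sols n (implied_eqs n S)"
  obtain x0 where x0: "x0 \<in> sols n S" "\<And>f. f \<in> S \<Longrightarrow> \<not> implied_eq n S f \<Longrightarrow> lin n f x0 > 0"
    using ex_relative_interior_point[OF assms] by blast
  have "\<forall>f\<in>S. lin n f x0 > 0 \<or> (lin n f x0 \<ge> 0 \<and> lin n f x \<ge> 0)"
    using x0 x lin_implied_eq_zero[OF x0(1)] unfolding eq_sols_def implied_eqs_def by force
  then obtain K where "K \<ge> 0" and a: "(\<lambda>i. K * x0 i + x i) \<in> sols n S"
    using ex_multiple_add_mem_sols[OF assms] x0(1) x unfolding sols_def eq_sols_def by blast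
  have "(\<lambda>i. K * x0 i) \<in> sols n S"
    using x0(1) \<open>K \<ge> 0\<close> unfolding sols_def vecs_def by (simp add: lin_scaled)
  with a show "x \<in> {(\<lambda>i. a i - b i) | a b. a \<in> sols n S \<and> b \<in> sols n S}" by force
next
  fix x assume "x \<in> {(\<lambda>i. a i - b i) | a b. a \<in> sols n S \<and> b \<in> sols n S}"
  then obtain a b where "x = (\<lambda>i. a i - b i)" "a \<in> sols n S" "b \<in> sols n S" by blast
  moreover from this have "a \<in> eq_sols n (implied_eqs n S)" "b \<in> eq_sols n (implied_eqs n S)"
    using sols_subset_eq_sols_implied_eqs by blast+
  ultimately show "x \<in> eq_sols n (implied_eqs n S)"
    unfolding eq_sols_def by (auto simp: lin_diff vecs_def)
qed

lemma sols_reduced_ineqs: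
  assumes G: "rref n G" and GE: "eq_sols n G = eq_sols n (implied_eqs n S)"
  shows "sols n (reduced_ineqs n S G) = {x\<in>vecs n. proj n G x \<in> sols n S}"
proof (intro set_eqI iffI)
  fix x assume x: "x \<in> sols n (reduced_ineqs n S G)"
  then have "x \<in> vecs n" unfolding sols_def by simp
  have "lin n f (proj n G x) \<ge> 0" if f: "f \<in> S" for f
  proof (cases "implied_eq n S f")
    case True
    have "proj n G x \<in> eq_sols n (implied_eqs n S)" using proj_mem_eq_sols[OF G \<open>x \<in> vecs n\<close>] GE by simp
    then show ?thesis using f True unfolding eq_sols_def implied_eqs_def by auto
  next
    case False
    then have "subst G f \<in> reduced_ineqs n S G \<or> subst G f = (\<lambda>_. 0)"
      using f unfolding reduced_ineqs_def by auto
    then show ?thesis using x unfolding sols_def lin_proj[OF G] by (auto simp: lin_def)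
  qed
  then show "x \<in> {x\<in>vecs n. proj n G x \<in> sols n S}"
    using \<open>x \<in> vecs n\<close> proj_vecs[OF G] unfolding sols_def by auto
next
  fix x assume "x \<in> {x\<in>vecs n. proj n G x \<in> sols n S}"
  then show "x \<in> sols n (reduced_ineqs n S G)"
    unfolding sols_def reduced_ineqs_def by (auto simp: lin_proj[OF G, symmetric])
qed

lemma reduced_ineqs_interior_point:
  assumes "finite S" and "eq_sols n G = eq_sols n (implied_eqs n S)"
  shows "\<exists>z\<in>vecs n. \<forall>r\<in>reduced_ineqs n S G. lin n r z > 0"
proof -
  obtain x0 where x0: "x0 \<in> sols n S" "\<And>f. f \<in> S \<Longrightarrow> \<not> implied_eq n S f \<Longrightarrow> lin n f x0 > 0"
    using ex_relative_interior_point[OF assms(1)] by blast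
  have "x0 \<in> eq_sols n G" using sols_subset_eq_sols_implied_eqs x0(1) assms(2) by blast
  then have "\<forall>r\<in>reduced_ineqs n S G. lin n r x0 > 0"
    unfolding reduced_ineqs_def using x0(2) by (auto simp: lin_subst_eq_sols)
  then show ?thesis using x0(1) unfolding sols_def by auto
qed

lemma reduced_ineqs_finite_vecs:
  assumes "ineq_set n S" "rref n G"
  shows "finite (reduced_ineqs n S G) \<and> reduced_ineqs n S G \<subseteq> vecs n"
proof
  have "reduced_ineqs n S G \<subseteq> subst G ` S" unfolding reduced_ineqs_def by auto
  then show "finite (reduced_ineqs n S G)" using assms(1) unfolding ineq_set_def by (meson finite_surj)
  show "reduced_ineqs n S G \<subseteq> vecs n"
    using assms subst_vecs unfolding reduced_ineqs_def ineq_set_def rref_def by blast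
qed

lemma min_char_set_reduced_ineqs:
  assumes "ineq_set n S" "rref n G" "eq_sols n G = eq_sols n (implied_eqs n S)"
    and "min_char_set n (reduced_ineqs n S G) M"
  shows "finite M" "M \<subseteq> vecs n" "\<exists>z\<in>vecs n. \<forall>f\<in>M. lin n f z > 0"
proof -
  have M: "M \<subseteq> reduced_ineqs n S G" using assms(4) unfolding min_char_set_def by simp
  then show "finite M" "M \<subseteq> vecs n"
    using reduced_ineqs_finite_vecs[OF assms(1,2)] finite_subset by auto
  have "finite S" using assms(1) unfolding ineq_set_def by simp
  then show "\<exists>z\<in>vecs n. \<forall>f\<in>M. lin n f z > 0"
    using reduced_ineqs_interior_point[OF _ assms(3)] M by blast
qed

section \<open>Minimal characterizations of cones with interior points\<close>

lemma triv_equiv_sym: "triv_equiv f g \<Longrightarrow> triv_equiv g f"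
  unfolding triv_equiv_def
proof (elim exE conjE)
  fix c :: real assume "c > 0" "f = (\<lambda>i. c * g i)"
  then have "1 / c > 0" "g = (\<lambda>i. (1 / c) * f i)" by auto
  then show "\<exists>c>0. g = (\<lambda>i. c * f i)" by blast
qed

lemma triv_equiv_trans: "triv_equiv f g \<Longrightarrow> triv_equiv g h \<Longrightarrow> triv_equiv f h"
  unfolding triv_equiv_def
proof (elim exE conjE)
  fix c d :: real assume "c > 0" "f = (\<lambda>i. c * g i)" "d > 0" "g = (\<lambda>i. d * h i)"
  then have "c * d > 0" "f = (\<lambda>i. (c * d) * h i)" by auto
  then show "\<exists>c>0. f = (\<lambda>i. c * h i)" by blast
qed

lemma ex_facet_point:
  assumes m: "m \<in> M" "\<not> redundant n M m" and z: "z \<in> vecs n" "\<forall>f\<in>M. lin n f z > 0"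
  shows "\<exists>w\<in>sols n M. lin n m w = 0 \<and> (\<forall>f\<in>M - {m}. lin n f w > 0)"
proof -
  obtain y where y: "y \<in> sols n (M - {m})" "lin n m y < 0"
    using m unfolding redundant_def by (auto simp: not_le)
  \<comment> \<open>the point where the segment from z to y leaves the half-space of m\<close>
  define w where "w = (\<lambda>i. (- lin n m y) * z i + lin n m z * y i)"
  have lin_w: "lin n f w = (- lin n m y) * lin n f z + lin n m z * lin n f y" for f
    unfolding w_def by (rule lin_add_scaled)
  have w_zero: "lin n m w = 0" by (simp add: lin_w)
  have w_pos: "\<forall>f\<in>M - {m}. lin n f w > 0"
  proof
    fix f assume f: "f \<in> M - {m}"
    have "(- lin n m y) * lin n f z > 0" using y(2) z(2) f by (auto intro: mult_neg_pos)
    moreover have "lin n m z * lin n f y \<ge> 0"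
      using z(2) m(1) y(1) f unfolding sols_def by (simp add: less_imp_le)
    ultimately show "lin n f w > 0" by (simp add: lin_w)
  qed
  have "w \<in> vecs n" using z(1) y(1) unfolding w_def sols_def by (intro vecs_add_scaled) auto
  then have "w \<in> sols n M" using w_zero w_pos unfolding sols_def by (force simp: less_imp_le)
  with w_zero w_pos show ?thesis by blast
qed

lemma proportional_if_nonneg_imp_nonneg:
  assumes m: "m \<in> vecs n" and m2: "m2 \<in> vecs n" and z: "z \<in> vecs n" "lin n m z \<noteq> 0"
    and imp: "\<And>v. v \<in> vecs n \<Longrightarrow> lin n m v \<ge> 0 \<Longrightarrow> lin n m2 v \<ge> 0"
  shows "m2 = (\<lambda>i. (lin n m2 z / lin n m z) * m i)"
proof
  fix i
  show "m2 i = lin n m2 z / lin n m z * m i"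
  proof (cases "i < n")
    case False
    then show ?thesis using m m2 unfolding vecs_def by simp
  next
    case True
    define v where "v = (\<lambda>k. 1 * (if k = i then 1 else 0) + (- (m i / lin n m z)) * z k)"
    have lin_v: "lin n f v = f i - m i / lin n m z * lin n f z" for f
      unfolding v_def lin_add_scaled using lin_unit_vector[OF True, of f 1] by simp
    have "v \<in> vecs n" "(\<lambda>k. - v k) \<in> vecs n" using True z(1) unfolding v_def vecs_def by simp_all
    moreover have "lin n m v = 0" using z(2) by (simp add: lin_v)
    ultimately have "lin n m2 v \<ge> 0" "lin n m2 (\<lambda>k. - v k) \<ge> 0"
      using imp[of v] imp[of "\<lambda>k. - v k"] by (simp_all add: lin_minus)
    then have "lin n m2 v = 0" by (simp add: lin_minus)
    then show ?thesis using z(2) by (simp add: lin_v field_simps)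
  qed
qed

text \<open>The irredundant inequality m of M1 vanishes at a point w of the facet it supports; a
member m2 of M2 vanishing at w but not at the interior point z must be a positive multiple of m,
and it exists because otherwise a point beyond the facet would satisfy M2.\<close>

lemma nonredundant_ex_triv_equiv:
  assumes M1: "finite M1" "M1 \<subseteq> vecs n" and M2: "finite M2" "M2 \<subseteq> vecs n"
    and eq: "sols n M1 = sols n M2" and m: "m \<in> M1" "\<not> redundant n M1 m"
    and z: "z \<in> vecs n" "\<forall>f\<in>M1. lin n f z > 0"
  shows "\<exists>m2\<in>M2. triv_equiv m m2"
proof -
  obtain w where w: "w \<in> sols n M1" "lin n m w = 0" "\<forall>f\<in>M1 - {m}. lin n f w > 0"
    using ex_facet_point[OF m z] by blast
  have "w \<in> vecs n" using w(1) unfolding sols_def by simp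
  have "lin n m z > 0" using z(2) m(1) by simp
  have lin_shift: "lin n f (\<lambda>i. K * w i + v i) = K * lin n f w + lin n f v" for f K v
    using lin_add_scaled[of n f K w 1 v] by simp
  have "\<exists>m2\<in>M2. lin n m2 w = 0 \<and> lin n m2 z > 0"
  proof (rule ccontr)
    assume "\<not> ?thesis"
    moreover have "w \<in> sols n M2" using w(1) eq by simp
    ultimately have "\<forall>f\<in>M2. lin n f w > 0 \<or> (lin n f w \<ge> 0 \<and> lin n f (\<lambda>i. - z i) \<ge> 0)"
      unfolding sols_def by (force simp: lin_minus)
    then obtain K where "(\<lambda>i. K * w i + - z i) \<in> sols n M1"
      using ex_multiple_add_mem_sols[OF M2(1) \<open>w \<in> vecs n\<close>, of "\<lambda>i. - z i"] z(1) eq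
      by (auto simp: vecs_def)
    then have "lin n m (\<lambda>i. K * w i + - z i) \<ge> 0" using m(1) unfolding sols_def by blast
    then show False using w(2) \<open>lin n m z > 0\<close> by (simp add: lin_diff lin_scaled)
  qed
  then obtain m2 where m2: "m2 \<in> M2" "lin n m2 w = 0" "lin n m2 z > 0" by blast
  have "lin n m2 v \<ge> 0" if v: "v \<in> vecs n" "lin n m v \<ge> 0" for v
  proof -
    have "\<forall>f\<in>M1. lin n f w > 0 \<or> (lin n f w \<ge> 0 \<and> lin n f v \<ge> 0)" using w v(2) by auto
    then obtain K where "(\<lambda>i. K * w i + v i) \<in> sols n M2"
      using ex_multiple_add_mem_sols[OF M1(1) \<open>w \<in> vecs n\<close> v(1)] eq by auto
    then show ?thesis using m2(1,2) unfolding sols_def by (auto simp: lin_shift)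
  qed
  then have "m2 = (\<lambda>i. (lin n m2 z / lin n m z) * m i)"
    using M1(2) M2(2) m(1) m2(1) z(1) \<open>lin n m z > 0\<close>
    by (intro proportional_if_nonneg_imp_nonneg) auto
  moreover have "lin n m2 z / lin n m z > 0" using m2(3) \<open>lin n m z > 0\<close> by simp
  ultimately have "triv_equiv m2 m" unfolding triv_equiv_def by blast
  then show ?thesis using m2(1) triv_equiv_sym by blast
qed

lemma triv_equiv_redundant:
  assumes "f \<in> M" "g \<in> M" "f \<noteq> g" "triv_equiv f g"
  shows "redundant n M f"
proof -
  obtain c where "c > 0" "f = (\<lambda>i. c * g i)" using assms(4) unfolding triv_equiv_def by blast
  then have "lin n f x = c * lin n g x" for x by (simp add: lin_scaled_form)
  then show ?thesis using assms(1-3) \<open>c > 0\<close> unfolding redundant_def sols_def by simp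
qed

lemma card_le_if_triv_equiv:
  assumes "finite B" "\<forall>f\<in>A. \<exists>g\<in>B. triv_equiv f g" "\<forall>f\<in>A. \<not> redundant n A f"
  shows "card A \<le> card B"
proof -
  obtain \<phi> where \<phi>: "\<And>f. f \<in> A \<Longrightarrow> \<phi> f \<in> B \<and> triv_equiv f (\<phi> f)" using assms(2) by metis
  have "inj_on \<phi> A"
  proof (rule inj_onI)
    fix f g assume fg: "f \<in> A" "g \<in> A" "\<phi> f = \<phi> g"
    then have "triv_equiv f g" using \<phi> triv_equiv_sym triv_equiv_trans by metis
    then show "f = g" using triv_equiv_redundant assms(3) fg(1,2) by blast
  qed
  then show ?thesis using card_inj_on_le \<phi> assms(1) by blast
qed

lemma nonredundant_triv_equiv_sets:
  assumes M1: "finite M1" "M1 \<subseteq> vecs n" "\<forall>f\<in>M1. \<not> redundant n M1 f"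
      "\<exists>z\<in>vecs n. \<forall>f\<in>M1. lin n f z > 0"
    and M2: "finite M2" "M2 \<subseteq> vecs n" "\<forall>f\<in>M2. \<not> redundant n M2 f"
      "\<exists>z\<in>vecs n. \<forall>f\<in>M2. lin n f z > 0"
    and eq: "sols n M1 = sols n M2"
  shows "triv_equiv_sets M1 M2"
proof -
  have "\<forall>f\<in>M1. \<exists>g\<in>M2. triv_equiv f g"
    using nonredundant_ex_triv_equiv[OF M1(1,2) M2(1,2) eq] M1(3,4) by blast
  moreover have "\<forall>g\<in>M2. \<exists>f\<in>M1. triv_equiv g f"
    using nonredundant_ex_triv_equiv[OF M2(1,2) M1(1,2) eq[symmetric]] M2(3,4) by blast
  ultimately show ?thesis
    unfolding triv_equiv_sets_def using card_le_if_triv_equiv M1(1,3) M2(1,3) by (meson le_antisym)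
qed

theorem theorem7:
  fixes n :: nat and Sf Sg Gf Gg Mf Mg :: "(nat \<Rightarrow> real) set"
  assumes "ineq_set n Sf" and "ineq_set n Sg"
    and "sols n Sf = sols n Sg"
    and "gj_reduced_form n (implied_eqs n Sf) Gf"
    and "gj_reduced_form n (implied_eqs n Sg) Gg"
    and "min_char_set n (reduced_ineqs n Sf Gf) Mf"
    and "min_char_set n (reduced_ineqs n Sg Gg) Mg"
  shows "Gf = Gg \<and> triv_equiv_sets Mf Mg"
proof -
  have Gf: "rref n Gf" "eq_sols n Gf = eq_sols n (implied_eqs n Sf)"
    and Gg: "rref n Gg" "eq_sols n Gg = eq_sols n (implied_eqs n Sg)"
    using assms(4,5) unfolding gj_reduced_form_iff by auto
  have "eq_sols n (implied_eqs n Sf) = eq_sols n (implied_eqs n Sg)"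
    using assms(1-3) by (simp add: eq_sols_implied_eqs ineq_set_def)
  then have "Gf = Gg" using rref_unique Gf Gg by simp
  then have "sols n (reduced_ineqs n Sf Gf) = sols n (reduced_ineqs n Sg Gg)"
    using sols_reduced_ineqs[OF Gf] sols_reduced_ineqs[OF Gg] assms(3) by simp
  then have "sols n Mf = sols n Mg" using assms(6,7) unfolding min_char_set_def by simp
  then have "triv_equiv_sets Mf Mg"
    using nonredundant_triv_equiv_sets min_char_set_reduced_ineqs[OF assms(1) Gf assms(6)]
      min_char_set_reduced_ineqs[OF assms(2) Gg assms(7)] assms(6,7)
    unfolding min_char_set_def by blast
  with \<open>Gf = Gg\<close> show ?thesis ..
qed

end
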